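(* Assume the exploration assumption in the context and let $\Pi=\{\pi:\min_{s,a}\pi(a\mid s)>0\}$. Then: (1) For any $\pi\in\Pi$, $\bar F(Q,\pi)=[(I-D_\pi)+D_\pi\mathcal H](Q)$ for all $Q\in\mathbb R^{|\mathcal S||\mathcal A|}$, where $D_\pi=\mathrm{diag}(\bar\mu_\pi)$. (2) For any $Q_1,Q_2$ and $\pi\in\Pi$: $\|\bar F(Q_1,\pi)-\bar F(Q_2,\pi)\|_\infty\le\gamma_\pi\|Q_1-Q_2\|_\infty$ and $\|\bar F(Q_1,\pi)\|_\infty\le\|Q_1\|_\infty+1$, where $\gamma_\pi=1-D_{\pi,\min}(1-\gamma)$ and $D_{\pi,\min}=\min_{s,a}\bar\mu_\pi(s,a)>0$. (3) For any $\pi\in\Pi$, the equation $\bar F(Q,\pi)=Q$ has the unique solution $Q=Q^*$. (4) For any $Q_1,Q_2$ with $\|Q_1\|_\infty,\|Q_2\|_\infty\le1/(1-\gamma)$ and $\pi_1,\pi_2\in\Pi$: $\|\bar F(Q_1,\pi_1)-\bar F(Q_2,\pi_2)\|_\infty\le3\|Q_1-Q_2\|_\infty+\frac{2}{1-\gamma}\|\bar\mu_{\pi_1}-\bar\mu_{\pi_2}\|_\infty$.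
   Context: Finite MDP: states $\mathcal S$, actions $\mathcal A$, kernel $p(s'\mid s,a)$, reward $\mathcal R$ with $|\mathcal R(s,a)|\le1$, discount $\gamma\in(0,1)$. $[\mathcal H(Q)](s,a)=\mathcal R(s,a)+\gamma\sum_{s'}p(s'\mid s,a)\max_{a'}Q(s',a')$; $Q^*$ its unique fixed point (optimal Q-function). Exploration assumption: there is a policy $\pi_b$ with $\pi_b(a\mid s)>0$ for all $(s,a)$ whose state chain $P_{\pi_b}(s,s')=\sum_ap(s'\mid s,a)\pi_b(a\mid s)$ is irreducible. For $\pi\in\Pi$, the state chain $P_\pi$ is then irreducible with unique stationary distribution $\mu_\pi$, and $\bar\mu_\pi(s,a)=\mu_\pi(s)\pi(a\mid s)$ is the stationary distribution of the state-action chain $\bar P_\pi((s,a),(s',a'))=p(s'\mid s,a)\pi(a'\mid s')$. For $Q\in\mathbb R^{|\mathcal S||\mathcal A|}$ and $y=(s_0,a_0)\in\mathcal S\times\mathcal A$: $[F(Q,y)](s,a)=\mathbb 1_{\{(s_0,a_0)=(s,a)\}}(\mathcal R(s,a)+\gamma\sum_{s'}p(s'\mid s,a)\max_{a'}Q(s',a')-Q(s,a))+Q(s,a)$, and $\bar F(Q,\pi)=\mathbb E_{Y\sim\bar\mu_\pi}[F(Q,Y)]$. $\|\cdot\|_\infty$ is the max norm. *)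

theory Defs
  imports Complex_Main
begin

(* Finite MDP: states 's::finite, actions 'a::finite.
   Kernel p s a s' = p(s'|s,a); reward R s a; policies pi s a = pi(a|s);
   Q-functions are maps ('s \<times> 'a) \<Rightarrow> real. *)

definition is_kernel :: "('s::finite \<Rightarrow> 'a::finite \<Rightarrow> 's \<Rightarrow> real) \<Rightarrow> bool" where
  "is_kernel p \<longleftrightarrow> (\<forall>s a s'. 0 \<le> p s a s') \<and> (\<forall>s a. (\<Sum>s'\<in>UNIV. p s a s') = 1)"

definition is_policy :: "('s::finite \<Rightarrow> 'a::finite \<Rightarrow> real) \<Rightarrow> bool" where
  "is_policy \<pi> \<longleftrightarrow> (\<forall>s a. 0 \<le> \<pi> s a) \<and> (\<forall>s. (\<Sum>a\<in>UNIV. \<pi> s a) = 1)"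

definition PiSet :: "('s::finite \<Rightarrow> 'a::finite \<Rightarrow> real) set" where
  "PiSet = {\<pi>. is_policy \<pi> \<and> (\<forall>s a. 0 < \<pi> s a)}"

definition Ppi :: "('s::finite \<Rightarrow> 'a::finite \<Rightarrow> 's \<Rightarrow> real) \<Rightarrow> ('s \<Rightarrow> 'a \<Rightarrow> real) \<Rightarrow> 's \<Rightarrow> 's \<Rightarrow> real" where
  "Ppi p \<pi> s s' = (\<Sum>a\<in>UNIV. p s a s' * \<pi> s a)"

definition irreducible :: "('s \<Rightarrow> 's \<Rightarrow> real) \<Rightarrow> bool" where
  "irreducible P \<longleftrightarrow> (\<forall>s s'. (s, s') \<in> {(x, y). 0 < P x y}\<^sup>*)"

definition stationary :: "('s::finite \<Rightarrow> 's \<Rightarrow> real) \<Rightarrow> ('s \<Rightarrow> real) \<Rightarrow> bool" where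
  "stationary P \<mu> \<longleftrightarrow> (\<forall>s. 0 \<le> \<mu> s) \<and> (\<Sum>s\<in>UNIV. \<mu> s) = 1 \<and>
      (\<forall>s'. \<mu> s' = (\<Sum>s\<in>UNIV. \<mu> s * P s s'))"

definition mu :: "('s::finite \<Rightarrow> 'a::finite \<Rightarrow> 's \<Rightarrow> real) \<Rightarrow> ('s \<Rightarrow> 'a \<Rightarrow> real) \<Rightarrow> 's \<Rightarrow> real" where
  "mu p \<pi> = (THE \<mu>. stationary (Ppi p \<pi>) \<mu>)"

definition mubar :: "('s::finite \<Rightarrow> 'a::finite \<Rightarrow> 's \<Rightarrow> real) \<Rightarrow> ('s \<Rightarrow> 'a \<Rightarrow> real) \<Rightarrow> 's \<times> 'a \<Rightarrow> real" where
  "mubar p \<pi> = (\<lambda>(s, a). mu p \<pi> s * \<pi> s a)"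

definition supnorm :: "('x::finite \<Rightarrow> real) \<Rightarrow> real" where
  "supnorm f = (MAX x\<in>UNIV. \<bar>f x\<bar>)"

definition Hop :: "('s::finite \<Rightarrow> 'a::finite \<Rightarrow> 's \<Rightarrow> real) \<Rightarrow> ('s \<Rightarrow> 'a \<Rightarrow> real) \<Rightarrow> real
      \<Rightarrow> ('s \<times> 'a \<Rightarrow> real) \<Rightarrow> 's \<times> 'a \<Rightarrow> real" where
  "Hop p R \<gamma> Q = (\<lambda>(s, a). R s a + \<gamma> * (\<Sum>s'\<in>UNIV. p s a s' * (MAX a'\<in>UNIV. Q (s', a'))))"

definition Qstar :: "('s::finite \<Rightarrow> 'a::finite \<Rightarrow> 's \<Rightarrow> real) \<Rightarrow> ('s \<Rightarrow> 'a \<Rightarrow> real) \<Rightarrow> real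
      \<Rightarrow> 's \<times> 'a \<Rightarrow> real" where
  "Qstar p R \<gamma> = (THE Q. Hop p R \<gamma> Q = Q)"

definition Fop :: "('s::finite \<Rightarrow> 'a::finite \<Rightarrow> 's \<Rightarrow> real) \<Rightarrow> ('s \<Rightarrow> 'a \<Rightarrow> real) \<Rightarrow> real
      \<Rightarrow> ('s \<times> 'a \<Rightarrow> real) \<Rightarrow> 's \<times> 'a \<Rightarrow> 's \<times> 'a \<Rightarrow> real" where
  "Fop p R \<gamma> Q y = (\<lambda>(s, a).
      (if y = (s, a) then 1 else 0) *
        (R s a + \<gamma> * (\<Sum>s'\<in>UNIV. p s a s' * (MAX a'\<in>UNIV. Q (s', a'))) - Q (s, a))
      + Q (s, a))"

definition Fbar :: "('s::finite \<Rightarrow> 'a::finite \<Rightarrow> 's \<Rightarrow> real) \<Rightarrow> ('s \<Rightarrow> 'a \<Rightarrow> real) \<Rightarrow> real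
      \<Rightarrow> ('s \<times> 'a \<Rightarrow> real) \<Rightarrow> ('s \<Rightarrow> 'a \<Rightarrow> real) \<Rightarrow> 's \<times> 'a \<Rightarrow> real" where
  "Fbar p R \<gamma> Q \<pi> = (\<lambda>x. \<Sum>y\<in>UNIV. mubar p \<pi> y * Fop p R \<gamma> Q y x)"

end

theory Submission imports "HOL-Analysis.Analysis" Defs begin

(* Averaging F over the stationary distribution turns it into the relaxed Bellman operator
   (I - D) Q + D H Q with D = diag(mubar).  H is a gamma-contraction in the max norm and the
   diagonal entries of D lie between D_min and 1, so the relaxed operator is a
   (1 - D_min (1 - gamma))-contraction; since D is positive, its fixed points are those of H.
   Positivity of D is the Perron-Frobenius part: a stationary distribution exists by Brouwer's
   theorem, irreducibility spreads positivity from one state to all, and the same argument applied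
   to nu - c mu with the extremal c gives uniqueness.  For the joint bound in (Q, pi) the difference
   splits into a Q-part, at most 3 ||Q1 - Q2||, and a mubar-part weighted by |H Q2 - Q2| <= 2/(1 - gamma). *)

section \<open>Stationary distributions of irreducible stochastic matrices\<close>

lemma stationaryD:
  assumes "stationary P \<mu>"
  shows "0 \<le> \<mu> s" "(\<Sum>s\<in>UNIV. \<mu> s) = 1" "\<mu> s' = (\<Sum>s\<in>UNIV. \<mu> s * P s s')"
  using assms unfolding stationary_def by blast+

lemma stationary_exists:
  fixes P :: "'s::finite \<Rightarrow> 's \<Rightarrow> real"
  assumes nonneg: "\<And>s s'. 0 \<le> P s s'" and rows: "\<And>s. (\<Sum>s'\<in>UNIV. P s s') = 1"
  shows "\<exists>\<mu>. stationary P \<mu>"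
proof -
  define S where "S = {v::real^'s. (\<forall>i. 0 \<le> v$i) \<and> (\<Sum>i\<in>UNIV. v$i) = 1}"
  define f where "f = (\<lambda>v::real^'s. \<chi> j. \<Sum>i\<in>UNIV. v$i * P i j)"
  have "closed S"
    unfolding S_def
    by (intro closed_Collect_conj closed_Collect_all closed_Collect_le closed_Collect_eq
        continuous_intros)
  moreover have "bounded S"
    unfolding bounded_iff
  proof (intro exI ballI)
    fix v assume "v \<in> S"
    then have "(\<Sum>i\<in>UNIV. \<bar>v$i\<bar>) = 1" by (simp add: S_def)
    then show "norm v \<le> 1" using norm_le_l1_cart[of v] by simp
  qed
  ultimately have "compact S" by (simp add: compact_eq_bounded_closed)
  moreover have "convex S"
    unfolding convex_def S_def by (auto simp: sum.distrib sum_distrib_left[symmetric])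
  moreover have "S \<noteq> {}"
  proof -
    have "(\<chi> i. if i = undefined then (1::real) else 0) \<in> S" by (simp add: S_def)
    then show ?thesis by blast
  qed
  moreover have "continuous_on S f" unfolding f_def by (intro continuous_intros)
  moreover have "f \<in> S \<rightarrow> S"
  proof
    fix v assume v: "v \<in> S"
    have "(\<Sum>j\<in>UNIV. \<Sum>i\<in>UNIV. v$i * P i j) = (\<Sum>i\<in>UNIV. v$i * (\<Sum>j\<in>UNIV. P i j))"
      by (subst sum.swap) (simp add: sum_distrib_left)
    also have "\<dots> = 1" using v by (simp add: rows S_def)
    finally show "f v \<in> S" using v nonneg by (auto simp: S_def f_def intro!: sum_nonneg)
  qed
  ultimately obtain v where "v \<in> S" "f v = v" using brouwer by blast
  then have "stationary P (\<lambda>i. v$i)"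
    unfolding stationary_def S_def f_def by (auto simp: vec_eq_iff)
  then show ?thesis by blast
qed

lemma invariant_pos_reachable:
  fixes P :: "'s::finite \<Rightarrow> 's \<Rightarrow> real"
  assumes nonneg: "\<And>s s'. 0 \<le> P s s'" and w_nonneg: "\<And>s. 0 \<le> w s"
    and invariant: "\<And>s'. w s' = (\<Sum>s\<in>UNIV. w s * P s s')"
    and reach: "(x, y) \<in> {(x, y). 0 < P x y}\<^sup>*" and pos: "0 < w x"
  shows "0 < w y"
  using reach
proof (induction rule: rtrancl_induct)
  case base
  then show ?case using pos .
next
  case (step y z)
  then have "0 < w y * P y z" by simp
  also have "\<dots> \<le> (\<Sum>s\<in>UNIV. w s * P s z)"
    by (rule member_le_sum) (auto simp: w_nonneg nonneg)
  finally show ?case using invariant[of z] by simp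
qed

lemma stationary_pos:
  fixes P :: "'s::finite \<Rightarrow> 's \<Rightarrow> real"
  assumes nonneg: "\<And>s s'. 0 \<le> P s s'" and irr: "irreducible P" and st: "stationary P \<mu>"
  shows "0 < \<mu> s"
proof -
  obtain s0 where "\<mu> s0 \<noteq> 0"
    using stationaryD(2)[OF st] by (metis sum.neutral zero_neq_one)
  then have "0 < \<mu> s0" using stationaryD(1)[OF st, of s0] by simp
  then show ?thesis
    using invariant_pos_reachable[of P \<mu> s0 s] nonneg stationaryD[OF st] irr
    unfolding irreducible_def by blast
qed

lemma stationary_unique:
  fixes P :: "'s::finite \<Rightarrow> 's \<Rightarrow> real"
  assumes nonneg: "\<And>s s'. 0 \<le> P s s'" and irr: "irreducible P"
    and st\<mu>: "stationary P \<mu>" and st\<nu>: "stationary P \<nu>"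
  shows "\<nu> = \<mu>"
proof -
  have \<mu>_pos: "0 < \<mu> s" for s using stationary_pos[OF nonneg irr st\<mu>] .
  define c where "c = (MIN s\<in>UNIV. \<nu> s / \<mu> s)"
  have "c \<in> range (\<lambda>s. \<nu> s / \<mu> s)" unfolding c_def by (rule Min_in) auto
  then obtain s0 where s0: "c = \<nu> s0 / \<mu> s0" by blast
  define w where "w = (\<lambda>s. \<nu> s - c * \<mu> s)"
  have w_nonneg: "0 \<le> w s" for s
  proof -
    have "c \<le> \<nu> s / \<mu> s" unfolding c_def by (rule Min_le) auto
    then show ?thesis using \<mu>_pos[of s] unfolding w_def by (simp add: pos_le_divide_eq)
  qed
  have "w s0 = 0" using s0 \<mu>_pos[of s0] unfolding w_def by simp
  have invariant: "w s' = (\<Sum>s\<in>UNIV. w s * P s s')" for s'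
    unfolding w_def using stationaryD(3)[OF st\<mu>, of s'] stationaryD(3)[OF st\<nu>, of s']
    by (simp add: left_diff_distrib sum_subtractf sum_distrib_left mult.assoc)
  have "w s = 0" for s
  proof (rule ccontr)
    assume "w s \<noteq> 0"
    then have "0 < w s" using w_nonneg[of s] by simp
    moreover have "(s, s0) \<in> {(x, y). 0 < P x y}\<^sup>*" using irr unfolding irreducible_def by blast
    ultimately have "0 < w s0" using invariant_pos_reachable[of P w s s0] nonneg w_nonneg invariant
      by blast
    with \<open>w s0 = 0\<close> show False by simp
  qed
  then have \<nu>_eq: "\<nu> s = c * \<mu> s" for s by (simp add: w_def)
  have "c = 1"
    using stationaryD(2)[OF st\<nu>] stationaryD(2)[OF st\<mu>] by (simp add: \<nu>_eq sum_distrib_left[symmetric])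
  then show ?thesis using \<nu>_eq by auto
qed

section \<open>Max-norm contractions\<close>

lemma abs_le_supnorm: "\<bar>f x\<bar> \<le> supnorm f"
  unfolding supnorm_def by (rule Max_ge) auto

lemma supnorm_leI: "(\<And>x. \<bar>f x\<bar> \<le> c) \<Longrightarrow> supnorm f \<le> c"
  unfolding supnorm_def by (subst Max_le_iff) auto

lemma supnorm_nonneg: "0 \<le> supnorm f"
  using abs_le_supnorm[of f] abs_ge_zero order_trans by blast

lemma supnorm_le_sum_abs: "supnorm f \<le> (\<Sum>x\<in>UNIV. \<bar>f x\<bar>)"
  by (rule supnorm_leI, rule member_le_sum) auto

lemma abs_Max_diff_le:
  fixes f g :: "'b::finite \<Rightarrow> real"
  assumes "\<And>a. \<bar>f a - g a\<bar> \<le> c"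
  shows "\<bar>(MAX a\<in>UNIV. f a) - (MAX a\<in>UNIV. g a)\<bar> \<le> c"
proof -
  have Max_le_shift: "(MAX a\<in>UNIV. f a) \<le> (MAX a\<in>UNIV. g a) + c" if "\<And>a. f a \<le> g a + c"
    for f g :: "'b \<Rightarrow> real"
    using that order_trans[OF that add_right_mono[OF Max_ge]] by (simp add: Max_le_iff)
  have fg: "f a \<le> g a + c" and gf: "g a \<le> f a + c" for a using assms[of a] by (auto simp: abs_le_iff)
  show ?thesis
    unfolding abs_le_iff using Max_le_shift[of f g, OF fg] Max_le_shift[of g f, OF gf] by linarith
qed

lemma convergent_geometric_increments:
  fixes X :: "nat \<Rightarrow> real"
  assumes incr: "\<And>n. \<bar>X (Suc n) - X n\<bar> \<le> C * \<gamma> ^ n" and "0 \<le> \<gamma>" "\<gamma> < 1"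
  shows "convergent X"
proof -
  have "summable (\<lambda>n. X (Suc n) - X n)"
    by (rule summable_comparison_test'[where g = "\<lambda>n. C * \<gamma> ^ n" and N = 0])
      (use assms in \<open>simp_all add: summable_geometric\<close>)
  then have "convergent (\<lambda>n. X n - X 0)"
    by (simp add: summable_iff_convergent sum_lessThan_telescope)
  then show ?thesis by (simp add: convergent_diff_const_right_iff)
qed

lemma supnorm_contraction_fixpoint:
  fixes T :: "('x::finite \<Rightarrow> real) \<Rightarrow> 'x \<Rightarrow> real"
  assumes contr: "\<And>f g x. \<bar>T f x - T g x\<bar> \<le> \<gamma> * supnorm (\<lambda>x. f x - g x)"
    and \<gamma>: "0 \<le> \<gamma>" "\<gamma> < 1"
  shows "\<exists>f. T f = f"
proof -
  define Q where "Q n = (T ^^ n) (\<lambda>_. 0)" for n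
  have Q_Suc: "Q (Suc n) = T (Q n)" for n by (simp add: Q_def)
  have incr: "supnorm (\<lambda>x. Q (Suc n) x - Q n x) \<le> \<gamma> ^ n * supnorm (\<lambda>x. Q 1 x - Q 0 x)" for n
  proof (induction n)
    case (Suc n)
    have "supnorm (\<lambda>x. Q (Suc (Suc n)) x - Q (Suc n) x) \<le> \<gamma> * supnorm (\<lambda>x. Q (Suc n) x - Q n x)"
      unfolding Q_Suc[of "Suc n"] Q_Suc[of n] by (rule supnorm_leI, rule contr)
    also have "\<dots> \<le> \<gamma> * (\<gamma> ^ n * supnorm (\<lambda>x. Q 1 x - Q 0 x))"
      using Suc \<gamma>(1) by (rule mult_left_mono)
    finally show ?case by simp
  qed simp
  define L where "L x = lim (\<lambda>n. Q n x)" for x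
  have "convergent (\<lambda>n. Q n x)" for x
    by (rule convergent_geometric_increments[where C = "supnorm (\<lambda>x. Q 1 x - Q 0 x)", OF _ \<gamma>])
      (use order_trans[OF abs_le_supnorm incr] in \<open>simp add: mult.commute\<close>)
  then have Q_lim: "(\<lambda>n. Q n x) \<longlonglongrightarrow> L x" for x
    by (simp add: L_def convergent_LIMSEQ_iff)
  have abs_sum_lim: "(\<lambda>n. \<Sum>x\<in>UNIV. \<bar>Q n x - L x\<bar>) \<longlonglongrightarrow> 0"
    by (intro tendsto_null_sum tendsto_rabs_zero LIM_zero Q_lim)
  have supnorm_lim: "(\<lambda>n. supnorm (\<lambda>x. Q n x - L x)) \<longlonglongrightarrow> 0"
    by (rule Lim_null_comparison[OF always_eventually abs_sum_lim])
      (simp add: supnorm_nonneg supnorm_le_sum_abs)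
  have "(\<lambda>n. Q (Suc n) x - T L x) \<longlonglongrightarrow> 0" for x
    by (rule Lim_null_comparison[OF always_eventually tendsto_mult_right_zero[OF supnorm_lim, of \<gamma>]])
      (simp add: Q_Suc contr)
  then have "(\<lambda>n. Q (Suc n) x) \<longlonglongrightarrow> T L x" for x by (rule LIM_zero_cancel)
  then have "T L x = L x" for x using LIMSEQ_Suc[OF Q_lim] LIMSEQ_unique by blast
  then show ?thesis by blast
qed

lemma supnorm_contraction_fixpoint_unique:
  fixes T :: "('x::finite \<Rightarrow> real) \<Rightarrow> 'x \<Rightarrow> real"
  assumes contr: "\<And>f g x. \<bar>T f x - T g x\<bar> \<le> \<gamma> * supnorm (\<lambda>x. f x - g x)"
    and "\<gamma> < 1" and "T f = f" "T g = g"
  shows "f = g"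
proof -
  let ?d = "supnorm (\<lambda>x. f x - g x)"
  have "?d \<le> \<gamma> * ?d" by (rule supnorm_leI) (metis contr assms(3,4))
  then have "?d \<le> 0" using \<open>\<gamma> < 1\<close> supnorm_nonneg[of "\<lambda>x. f x - g x"]
    by (metis mult_le_cancel_right1 not_le)
  then have "f x = g x" for x using abs_le_supnorm[of "\<lambda>x. f x - g x" x] by simp
  then show ?thesis by (rule ext)
qed

section \<open>The Bellman optimality operator\<close>

lemma Hop_contraction:
  assumes kernel: "is_kernel p" and "0 \<le> \<gamma>"
  shows "\<bar>Hop p R \<gamma> Q1 x - Hop p R \<gamma> Q2 x\<bar> \<le> \<gamma> * supnorm (\<lambda>x. Q1 x - Q2 x)"
proof -
  obtain s a where x: "x = (s, a)" by fastforce
  let ?d = "supnorm (\<lambda>x. Q1 x - Q2 x)"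
  let ?M = "\<lambda>Q s'. MAX a'\<in>UNIV. Q (s', a')"
  have "\<bar>?M Q1 s' - ?M Q2 s'\<bar> \<le> ?d" for s'
    by (rule abs_Max_diff_le) (rule abs_le_supnorm[where f = "\<lambda>x. Q1 x - Q2 x", of "(s', _)", simplified])
  then have term_le: "\<bar>p s a s' * (?M Q1 s' - ?M Q2 s')\<bar> \<le> p s a s' * ?d" for s'
    using kernel by (simp add: is_kernel_def abs_mult mult_left_mono)
  have "\<bar>\<Sum>s'\<in>UNIV. p s a s' * (?M Q1 s' - ?M Q2 s')\<bar> \<le> (\<Sum>s'\<in>UNIV. \<bar>p s a s' * (?M Q1 s' - ?M Q2 s')\<bar>)"
    by (rule sum_abs)
  also have "\<dots> \<le> (\<Sum>s'\<in>UNIV. p s a s' * ?d)" by (rule sum_mono) (rule term_le)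
  also have "\<dots> = ?d" using kernel by (simp add: is_kernel_def sum_distrib_right[symmetric])
  finally have "\<bar>(\<Sum>s'\<in>UNIV. p s a s' * ?M Q1 s') - (\<Sum>s'\<in>UNIV. p s a s' * ?M Q2 s')\<bar> \<le> ?d"
    by (simp add: sum_subtractf right_diff_distrib)
  then have "\<gamma> * \<bar>(\<Sum>s'\<in>UNIV. p s a s' * ?M Q1 s') - (\<Sum>s'\<in>UNIV. p s a s' * ?M Q2 s')\<bar> \<le> \<gamma> * ?d"
    using \<open>0 \<le> \<gamma>\<close> by (rule mult_left_mono)
  then show ?thesis
    using \<open>0 \<le> \<gamma>\<close> unfolding x Hop_def by (simp add: abs_mult right_diff_distrib[symmetric])
qed

lemma Hop_bounded:
  assumes "is_kernel p" "0 \<le> \<gamma>" and reward: "\<forall>s a. \<bar>R s a\<bar> \<le> 1"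
  shows "\<bar>Hop p R \<gamma> Q x\<bar> \<le> 1 + \<gamma> * supnorm Q"
proof -
  have "\<bar>Hop p R \<gamma> Q x - Hop p R \<gamma> (\<lambda>_. 0) x\<bar> \<le> \<gamma> * supnorm (\<lambda>x. Q x - 0)"
    by (rule Hop_contraction[OF assms(1,2)])
  moreover have "\<bar>Hop p R \<gamma> (\<lambda>_. 0) x\<bar> \<le> 1"
    using reward by (cases x) (simp add: Hop_def)
  ultimately show ?thesis by simp
qed

lemma Hop_fixpoint_iff_Qstar:
  assumes "is_kernel p" "0 \<le> \<gamma>" "\<gamma> < 1"
  shows "Hop p R \<gamma> Q = Q \<longleftrightarrow> Q = Qstar p R \<gamma>"
proof -
  note contr = Hop_contraction[OF assms(1,2)]
  have unique: "Q1 = Q2" if "Hop p R \<gamma> Q1 = Q1" "Hop p R \<gamma> Q2 = Q2" for Q1 Q2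
    using supnorm_contraction_fixpoint_unique[where T = "Hop p R \<gamma>", OF contr assms(3) that] .
  obtain Q0 where Q0: "Hop p R \<gamma> Q0 = Q0"
    using supnorm_contraction_fixpoint[where T = "Hop p R \<gamma>", OF contr assms(2,3)] by blast
  have "Qstar p R \<gamma> = Q0"
    unfolding Qstar_def by (rule the_equality[where P = "\<lambda>Q. Hop p R \<gamma> Q = Q", OF Q0]) (rule unique[OF _ Q0])
  then show ?thesis using Q0 unique by blast
qed

section \<open>The averaged operator\<close>

lemma Fbar_eq_relaxed_Hop:
  assumes "(\<Sum>y\<in>UNIV. mubar p \<pi> y) = 1"
  shows "Fbar p R \<gamma> Q \<pi> = (\<lambda>x. (1 - mubar p \<pi> x) * Q x + mubar p \<pi> x * Hop p R \<gamma> Q x)"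
proof
  fix x
  have "Fbar p R \<gamma> Q \<pi> x
      = (\<Sum>y\<in>UNIV. (if y = x then mubar p \<pi> y * (Hop p R \<gamma> Q x - Q x) else 0) + mubar p \<pi> y * Q x)"
    unfolding Fbar_def Fop_def Hop_def by (intro sum.cong) (auto split: prod.split simp: algebra_simps)
  also have "\<dots> = mubar p \<pi> x * (Hop p R \<gamma> Q x - Q x) + (\<Sum>y\<in>UNIV. mubar p \<pi> y) * Q x"
    by (simp add: sum.distrib sum_distrib_right)
  finally show "Fbar p R \<gamma> Q \<pi> x = (1 - mubar p \<pi> x) * Q x + mubar p \<pi> x * Hop p R \<gamma> Q x"
    using assms by (simp add: algebra_simps)
qed

lemma abs_relaxed_diff_contraction:
  fixes m \<mu> \<gamma> d q1 q2 h1 h2 :: real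
  assumes "0 \<le> m" "m \<le> 1" "\<mu> \<le> m" "\<gamma> \<le> 1" "\<bar>q1 - q2\<bar> \<le> d" "\<bar>h1 - h2\<bar> \<le> \<gamma> * d"
  shows "\<bar>((1 - m) * q1 + m * h1) - ((1 - m) * q2 + m * h2)\<bar> \<le> (1 - \<mu> * (1 - \<gamma>)) * d"
proof -
  have "0 \<le> d" using assms(5) abs_ge_zero order_trans by blast
  have "\<bar>((1 - m) * q1 + m * h1) - ((1 - m) * q2 + m * h2)\<bar> = \<bar>(1 - m) * (q1 - q2) + m * (h1 - h2)\<bar>"
    by (simp add: algebra_simps)
  also have "\<dots> \<le> \<bar>(1 - m) * (q1 - q2)\<bar> + \<bar>m * (h1 - h2)\<bar>" by (rule abs_triangle_ineq)
  also have "\<dots> = (1 - m) * \<bar>q1 - q2\<bar> + m * \<bar>h1 - h2\<bar>" using assms(1,2) by (simp add: abs_mult)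
  also have "\<dots> \<le> (1 - m) * d + m * (\<gamma> * d)" using assms by (intro add_mono mult_left_mono) auto
  also have "\<dots> = d - m * ((1 - \<gamma>) * d)" by (simp add: algebra_simps)
  also have "\<dots> \<le> d - \<mu> * ((1 - \<gamma>) * d)"
    using assms \<open>0 \<le> d\<close> by (intro diff_left_mono mult_right_mono) auto
  also have "\<dots> = (1 - \<mu> * (1 - \<gamma>)) * d" by (simp add: algebra_simps)
  finally show ?thesis .
qed

lemma abs_relaxed_bounded:
  fixes m \<gamma> N q h :: real
  assumes "0 \<le> m" "m \<le> 1" "\<gamma> \<le> 1" "\<bar>q\<bar> \<le> N" "\<bar>h\<bar> \<le> 1 + \<gamma> * N"
  shows "\<bar>(1 - m) * q + m * h\<bar> \<le> N + 1"
proof -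
  have "0 \<le> N" using assms(4) abs_ge_zero order_trans by blast
  have "\<bar>(1 - m) * q + m * h\<bar> \<le> \<bar>(1 - m) * q\<bar> + \<bar>m * h\<bar>" by (rule abs_triangle_ineq)
  also have "\<dots> = (1 - m) * \<bar>q\<bar> + m * \<bar>h\<bar>" using assms(1,2) by (simp add: abs_mult)
  also have "\<dots> \<le> (1 - m) * N + m * (1 + N)"
    using assms mult_right_mono[OF assms(3) \<open>0 \<le> N\<close>] by (intro add_mono mult_left_mono) auto
  also have "\<dots> = N + m" by (simp add: algebra_simps)
  finally show ?thesis using assms(2) by linarith
qed

lemma abs_relaxed_diff_le:
  fixes m1 m2 \<gamma> d e c q1 q2 h1 h2 :: real
  assumes "0 \<le> m1" "m1 \<le> 1" "\<gamma> \<le> 1" "\<bar>q1 - q2\<bar> \<le> d" "\<bar>h1 - h2\<bar> \<le> \<gamma> * d"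
    and "\<bar>m1 - m2\<bar> \<le> e" "\<bar>h2 - q2\<bar> \<le> c"
  shows "\<bar>((1 - m1) * q1 + m1 * h1) - ((1 - m2) * q2 + m2 * h2)\<bar> \<le> 3 * d + c * e"
proof -
  have "0 \<le> d" "0 \<le> e" using assms(4,6) abs_ge_zero order_trans by blast+
  have "\<gamma> * d \<le> d" using mult_right_mono[OF assms(3) \<open>0 \<le> d\<close>] by simp
  then have "\<bar>(h1 - h2) - (q1 - q2)\<bar> \<le> 2 * d" using assms(4,5) by linarith
  then have "\<bar>m1 * ((h1 - h2) - (q1 - q2))\<bar> \<le> 2 * d"
    unfolding abs_mult abs_of_nonneg[OF assms(1)]
    using mult_left_le_one_le[OF abs_ge_zero assms(1,2), of "(h1 - h2) - (q1 - q2)"] by linarith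
  moreover have "\<bar>(m1 - m2) * (h2 - q2)\<bar> \<le> c * e"
    using mult_mono[OF assms(6,7) \<open>0 \<le> e\<close> abs_ge_zero] by (simp add: abs_mult mult.commute)
  moreover have "((1 - m1) * q1 + m1 * h1) - ((1 - m2) * q2 + m2 * h2)
      = (q1 - q2) + m1 * ((h1 - h2) - (q1 - q2)) + (m1 - m2) * (h2 - q2)"
    by (simp add: algebra_simps)
  ultimately show ?thesis using assms(4) by linarith
qed

section \<open>Policies with full support\<close>

context
  fixes p :: "'s::finite \<Rightarrow> 'a::finite \<Rightarrow> 's \<Rightarrow> real"
  assumes kernel: "is_kernel p"
begin

lemma Ppi_nonneg: "is_policy \<pi> \<Longrightarrow> 0 \<le> Ppi p \<pi> s s'"
  using kernel unfolding Ppi_def is_kernel_def is_policy_def by (simp add: sum_nonneg)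

lemma Ppi_row_sum: "is_policy \<pi> \<Longrightarrow> (\<Sum>s'\<in>UNIV. Ppi p \<pi> s s') = 1"
proof -
  assume "is_policy \<pi>"
  have "(\<Sum>s'\<in>UNIV. Ppi p \<pi> s s') = (\<Sum>a\<in>UNIV. \<pi> s a * (\<Sum>s'\<in>UNIV. p s a s'))"
    unfolding Ppi_def by (subst sum.swap) (simp add: sum_distrib_left mult.commute)
  also have "\<dots> = 1" using kernel \<open>is_policy \<pi>\<close> by (simp add: is_kernel_def is_policy_def)
  finally show ?thesis .
qed

lemma Ppi_pos_iff:
  assumes "\<forall>s a. 0 < \<pi> s a"
  shows "0 < Ppi p \<pi> x y \<longleftrightarrow> (\<exists>a. 0 < p x a y)"
proof
  assume pos: "0 < Ppi p \<pi> x y"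
  show "\<exists>a. 0 < p x a y"
  proof (rule ccontr)
    assume "\<nexists>a. 0 < p x a y"
    then have "p x a y = 0" for a using kernel unfolding is_kernel_def by (meson antisym not_less)
    then have "Ppi p \<pi> x y = 0" by (simp add: Ppi_def)
    with pos show False by simp
  qed
next
  assume "\<exists>a. 0 < p x a y"
  then obtain a where "0 < p x a y" by blast
  then show "0 < Ppi p \<pi> x y"
    unfolding Ppi_def using kernel assms
    by (intro sum_pos2[of UNIV a]) (auto simp: is_kernel_def less_imp_le)
qed

context
  assumes explore: "\<exists>\<pi>b. is_policy \<pi>b \<and> (\<forall>s a. 0 < \<pi>b s a) \<and> irreducible (Ppi p \<pi>b)"
begin

\<comment> \<open>Irreducibility depends only on the support of the transition matrix, which is the same for
  all policies of full support.\<close>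
lemma irreducible_Ppi: "\<pi> \<in> PiSet \<Longrightarrow> irreducible (Ppi p \<pi>)"
proof -
  assume "\<pi> \<in> PiSet"
  moreover obtain \<pi>b where "is_policy \<pi>b" "\<forall>s a. 0 < \<pi>b s a" "irreducible (Ppi p \<pi>b)"
    using explore by blast
  ultimately have "{(x, y). 0 < Ppi p \<pi> x y} = {(x, y). 0 < Ppi p \<pi>b x y}"
    by (simp add: PiSet_def Ppi_pos_iff)
  with \<open>irreducible (Ppi p \<pi>b)\<close> show ?thesis by (simp add: irreducible_def)
qed

lemma stationary_mu: "\<pi> \<in> PiSet \<Longrightarrow> stationary (Ppi p \<pi>) (mu p \<pi>)"
proof -
  assume "\<pi> \<in> PiSet"
  then have nonneg: "0 \<le> Ppi p \<pi> s s'" and rows: "(\<Sum>s'\<in>UNIV. Ppi p \<pi> s s') = 1" for s s'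
    by (simp_all add: PiSet_def Ppi_nonneg Ppi_row_sum)
  obtain \<mu> where \<mu>: "stationary (Ppi p \<pi>) \<mu>"
    using stationary_exists[where P = "Ppi p \<pi>", OF nonneg rows] by blast
  show ?thesis
    unfolding mu_def
    by (rule theI[where P = "stationary (Ppi p \<pi>)", OF \<mu>])
      (rule stationary_unique[where P = "Ppi p \<pi>", OF nonneg irreducible_Ppi[OF \<open>\<pi> \<in> PiSet\<close>] \<mu>])
qed

lemma mubar_pos: "\<pi> \<in> PiSet \<Longrightarrow> 0 < mubar p \<pi> x"
  using stationary_pos[OF Ppi_nonneg irreducible_Ppi stationary_mu]
  by (cases x) (simp add: mubar_def PiSet_def)

lemma sum_mubar: "\<pi> \<in> PiSet \<Longrightarrow> (\<Sum>x\<in>UNIV. mubar p \<pi> x) = 1"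
proof -
  assume "\<pi> \<in> PiSet"
  have "(\<Sum>x\<in>UNIV. mubar p \<pi> x) = (\<Sum>s\<in>UNIV. \<Sum>a\<in>UNIV. mu p \<pi> s * \<pi> s a)"
    unfolding mubar_def UNIV_Times_UNIV[symmetric] sum.cartesian_product by simp
  also have "\<dots> = (\<Sum>s\<in>UNIV. mu p \<pi> s)"
    using \<open>\<pi> \<in> PiSet\<close> by (simp add: sum_distrib_left[symmetric] PiSet_def is_policy_def)
  also have "\<dots> = 1" using stationaryD(2)[OF stationary_mu[OF \<open>\<pi> \<in> PiSet\<close>]] .
  finally show ?thesis .
qed

lemma mubar_le_one: "\<pi> \<in> PiSet \<Longrightarrow> mubar p \<pi> x \<le> 1"
  using member_le_sum[of x UNIV "mubar p \<pi>"] sum_mubar mubar_pos by (simp add: less_imp_le)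

lemma Min_mubar_pos: "\<pi> \<in> PiSet \<Longrightarrow> 0 < (MIN x\<in>UNIV. mubar p \<pi> x)"
  using mubar_pos by simp

lemma Fbar_contraction:
  assumes "\<pi> \<in> PiSet" "0 \<le> \<gamma>" "\<gamma> \<le> 1"
  shows "supnorm (\<lambda>x. Fbar p R \<gamma> Q1 \<pi> x - Fbar p R \<gamma> Q2 \<pi> x)
    \<le> (1 - (MIN x\<in>UNIV. mubar p \<pi> x) * (1 - \<gamma>)) * supnorm (\<lambda>x. Q1 x - Q2 x)"
proof (rule supnorm_leI)
  fix x
  have m: "0 \<le> mubar p \<pi> x" "mubar p \<pi> x \<le> 1"
    using less_imp_le[OF mubar_pos] mubar_le_one assms(1) by auto
  have "(MIN y\<in>UNIV. mubar p \<pi> y) \<le> mubar p \<pi> x" by (rule Min_le) auto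
  moreover have "\<bar>Q1 x - Q2 x\<bar> \<le> supnorm (\<lambda>x. Q1 x - Q2 x)" by (rule abs_le_supnorm)
  moreover have "\<bar>Hop p R \<gamma> Q1 x - Hop p R \<gamma> Q2 x\<bar> \<le> \<gamma> * supnorm (\<lambda>x. Q1 x - Q2 x)"
    by (rule Hop_contraction[OF kernel assms(2)])
  ultimately show "\<bar>Fbar p R \<gamma> Q1 \<pi> x - Fbar p R \<gamma> Q2 \<pi> x\<bar>
    \<le> (1 - (MIN x\<in>UNIV. mubar p \<pi> x) * (1 - \<gamma>)) * supnorm (\<lambda>x. Q1 x - Q2 x)"
    unfolding Fbar_eq_relaxed_Hop[OF sum_mubar[OF assms(1)]]
    using abs_relaxed_diff_contraction[OF m _ assms(3)] by blast
qed

lemma supnorm_Fbar_le: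
  assumes "\<pi> \<in> PiSet" "0 \<le> \<gamma>" "\<gamma> \<le> 1" "\<forall>s a. \<bar>R s a\<bar> \<le> 1"
  shows "supnorm (Fbar p R \<gamma> Q \<pi>) \<le> supnorm Q + 1"
proof (rule supnorm_leI)
  fix x
  have m: "0 \<le> mubar p \<pi> x" "mubar p \<pi> x \<le> 1"
    using less_imp_le[OF mubar_pos] mubar_le_one assms(1) by auto
  show "\<bar>Fbar p R \<gamma> Q \<pi> x\<bar> \<le> supnorm Q + 1"
    unfolding Fbar_eq_relaxed_Hop[OF sum_mubar[OF assms(1)]]
    by (rule abs_relaxed_bounded[OF m assms(3) abs_le_supnorm Hop_bounded[OF kernel assms(2,4)]])
qed

lemma Fbar_fixpoint_iff:
  assumes "\<pi> \<in> PiSet" "0 \<le> \<gamma>" "\<gamma> < 1"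
  shows "Fbar p R \<gamma> Q \<pi> = Q \<longleftrightarrow> Q = Qstar p R \<gamma>"
proof -
  have "Fbar p R \<gamma> Q \<pi> = Q \<longleftrightarrow> (\<forall>x. mubar p \<pi> x * (Hop p R \<gamma> Q x - Q x) = 0)"
    unfolding Fbar_eq_relaxed_Hop[OF sum_mubar[OF assms(1)]] fun_eq_iff by (simp add: algebra_simps)
  also have "\<dots> \<longleftrightarrow> Hop p R \<gamma> Q = Q"
    using mubar_pos[OF assms(1)] by (auto simp: fun_eq_iff less_le)
  finally show ?thesis using Hop_fixpoint_iff_Qstar[OF kernel assms(2,3)] by simp
qed

lemma Fbar_lipschitz:
  assumes \<pi>: "\<pi>1 \<in> PiSet" "\<pi>2 \<in> PiSet" and \<gamma>: "0 \<le> \<gamma>" "\<gamma> < 1"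
    and reward: "\<forall>s a. \<bar>R s a\<bar> \<le> 1" and Q2_bounded: "supnorm Q2 \<le> 1 / (1 - \<gamma>)"
  shows "supnorm (\<lambda>x. Fbar p R \<gamma> Q1 \<pi>1 x - Fbar p R \<gamma> Q2 \<pi>2 x)
    \<le> 3 * supnorm (\<lambda>x. Q1 x - Q2 x) + 2 / (1 - \<gamma>) * supnorm (\<lambda>x. mubar p \<pi>1 x - mubar p \<pi>2 x)"
proof (rule supnorm_leI)
  fix x
  have m: "0 \<le> mubar p \<pi>1 x" "mubar p \<pi>1 x \<le> 1"
    using less_imp_le[OF mubar_pos] mubar_le_one \<pi>(1) by auto
  have "\<bar>Hop p R \<gamma> Q2 x - Q2 x\<bar> \<le> (1 + \<gamma> * (1 / (1 - \<gamma>))) + 1 / (1 - \<gamma>)"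
    using Hop_bounded[OF kernel \<gamma>(1) reward, of Q2 x] abs_le_supnorm[of Q2 x] Q2_bounded
      mult_left_mono[OF Q2_bounded \<gamma>(1)] abs_triangle_ineq4[of "Hop p R \<gamma> Q2 x" "Q2 x"]
    by linarith
  also have "\<dots> = 2 / (1 - \<gamma>)" using \<gamma>(2) by (simp add: field_simps)
  finally have "\<bar>Hop p R \<gamma> Q2 x - Q2 x\<bar> \<le> 2 / (1 - \<gamma>)" .
  moreover have "\<bar>Q1 x - Q2 x\<bar> \<le> supnorm (\<lambda>x. Q1 x - Q2 x)"
    and "\<bar>mubar p \<pi>1 x - mubar p \<pi>2 x\<bar> \<le> supnorm (\<lambda>x. mubar p \<pi>1 x - mubar p \<pi>2 x)"
    by (rule abs_le_supnorm)+
  moreover have "\<bar>Hop p R \<gamma> Q1 x - Hop p R \<gamma> Q2 x\<bar> \<le> \<gamma> * supnorm (\<lambda>x. Q1 x - Q2 x)"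
    by (rule Hop_contraction[OF kernel \<gamma>(1)])
  ultimately show "\<bar>Fbar p R \<gamma> Q1 \<pi>1 x - Fbar p R \<gamma> Q2 \<pi>2 x\<bar>
    \<le> 3 * supnorm (\<lambda>x. Q1 x - Q2 x) + 2 / (1 - \<gamma>) * supnorm (\<lambda>x. mubar p \<pi>1 x - mubar p \<pi>2 x)"
    unfolding Fbar_eq_relaxed_Hop[OF sum_mubar[OF \<pi>(1)]] Fbar_eq_relaxed_Hop[OF sum_mubar[OF \<pi>(2)]]
    using abs_relaxed_diff_le[OF m less_imp_le[OF \<gamma>(2)]] by blast
qed

end

end

theorem lemma2:
  fixes p :: "'s::finite \<Rightarrow> 'a::finite \<Rightarrow> 's \<Rightarrow> real"
    and R :: "'s \<Rightarrow> 'a \<Rightarrow> real"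
    and \<gamma> :: real
  assumes kernel: "is_kernel p"
    and reward: "\<forall>s a. \<bar>R s a\<bar> \<le> 1"
    and gamma: "0 < \<gamma>" "\<gamma> < 1"
    and explore: "\<exists>\<pi>b. is_policy \<pi>b \<and> (\<forall>s a. 0 < \<pi>b s a) \<and> irreducible (Ppi p \<pi>b)"
  shows
    "(\<forall>\<pi>\<in>PiSet. \<forall>Q.
        Fbar p R \<gamma> Q \<pi> = (\<lambda>x. (1 - mubar p \<pi> x) * Q x + mubar p \<pi> x * Hop p R \<gamma> Q x))
     \<and> (\<forall>\<pi>\<in>PiSet. 0 < (MIN x\<in>UNIV. mubar p \<pi> x) \<and>
        (\<forall>Q1 Q2.
          supnorm (\<lambda>x. Fbar p R \<gamma> Q1 \<pi> x - Fbar p R \<gamma> Q2 \<pi> x)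
            \<le> (1 - (MIN x\<in>UNIV. mubar p \<pi> x) * (1 - \<gamma>)) * supnorm (\<lambda>x. Q1 x - Q2 x)
          \<and> supnorm (Fbar p R \<gamma> Q1 \<pi>) \<le> supnorm Q1 + 1))
     \<and> (\<forall>\<pi>\<in>PiSet. \<forall>Q. Fbar p R \<gamma> Q \<pi> = Q \<longleftrightarrow> Q = Qstar p R \<gamma>)
     \<and> (\<forall>Q1 Q2 \<pi>1 \<pi>2. supnorm Q1 \<le> 1 / (1 - \<gamma>) \<longrightarrow> supnorm Q2 \<le> 1 / (1 - \<gamma>)
          \<longrightarrow> \<pi>1 \<in> PiSet \<longrightarrow> \<pi>2 \<in> PiSet \<longrightarrow>
          supnorm (\<lambda>x. Fbar p R \<gamma> Q1 \<pi>1 x - Fbar p R \<gamma> Q2 \<pi>2 x)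
            \<le> 3 * supnorm (\<lambda>x. Q1 x - Q2 x)
              + 2 / (1 - \<gamma>) * supnorm (\<lambda>x. mubar p \<pi>1 x - mubar p \<pi>2 x))"
proof -
  have \<gamma>: "0 \<le> \<gamma>" "\<gamma> \<le> 1" "\<gamma> < 1" using gamma by auto
  show ?thesis
    using Fbar_eq_relaxed_Hop[OF sum_mubar[OF kernel explore]] Min_mubar_pos[OF kernel explore]
      Fbar_contraction[OF kernel explore _ \<gamma>(1,2)] supnorm_Fbar_le[OF kernel explore _ \<gamma>(1,2) reward]
      Fbar_fixpoint_iff[OF kernel explore _ \<gamma>(1,3)] Fbar_lipschitz[OF kernel explore _ _ \<gamma>(1,3) reward]
    by blast
qed

end
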